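(* Let $(M,\varphi,g)$ be an anti-paraKähler manifold of dimension $2k$, $(TM,g_{BS})$ its tangent bundle with the Berger type deformed Sasaki metric, and $\xi$ a vector field on $M$ regarded as a map $\xi:(M,g)\to(TM,g_{BS})$. If $\xi$ is an isometric immersion (i.e. $\xi^*g_{BS}=g$), then $\xi$ is totally geodesic; in particular $\xi$ is harmonic.
   Context: An anti-paraKähler manifold $(M,\varphi,g)$ of dimension $2k$ consists of a Riemannian metric $g$ and a $(1,1)$-tensor field $\varphi$ with $\varphi^2=\mathrm{id}$ whose $(+1)$- and $(-1)$-eigenbundles both have rank $k$, such that $g(\varphi X,Y)=g(X,\varphi Y)$ for all vector fields $X,Y$ and $\nabla\varphi=0$, where $\nabla$ is the Levi-Civita connection of $g$. Let $\pi:TM\to M$ be the tangent bundle; points of $TM$ are denoted $u$. For a vector field $X$ on $M$, $X^H$ denotes its horizontal lift to $TM$ with respect to $\nabla$ and $X^V$ its vertical lift. For a constant $\delta$, the Berger type deformed Sasaki metric $g_{BS}$ on $TM$ is the Riemannian metric defined at $u\in TM$ by $g_{BS}(X^H,Y^H)=g(X,Y)$, $g_{BS}(X^H,Y^V)=g_{BS}(X^V,Y^H)=0$, $g_{BS}(X^V,Y^V)=g(X,Y)+\delta^2 g(X,\varphi u)\,g(Y,\varphi u)$ (all evaluated at $\pi(u)$). For a smooth map $f$ between Riemannian manifolds, $\beta(f)(X,Y)=\nabla^{f}_X(df(Y))-df(\nabla_XY)$ and $\tau(f)=\mathrm{trace}\,\beta(f)$; $f$ is totally geodesic if $\beta(f)=0$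 and harmonic if $\tau(f)=0$. *)

theory Defs
  imports "HOL-Analysis.Analysis"
begin

text \<open>Local-coordinate setting: the manifold M is an open set U of real^'n
(coordinates x^i), the tangent bundle TU is U x real^'n with coordinates (x^i, y^i),
represented as vectors in real^('n + 'n): Inl i = x^i, Inr i = y^i.\<close>

definition pd :: "'n::finite \<Rightarrow> (real^'n \<Rightarrow> real) \<Rightarrow> real^'n \<Rightarrow> real" where
  "pd i f x = deriv (\<lambda>t. f (x + t *\<^sub>R axis i 1)) 0"

fun iter_pd :: "'n::finite list \<Rightarrow> (real^'n \<Rightarrow> real) \<Rightarrow> real^'n \<Rightarrow> real" where
  "iter_pd [] f = f"
| "iter_pd (i # is) f = pd i (iter_pd is f)"

definition Cinf_on :: "(real^'n::finite) set \<Rightarrow> (real^'n \<Rightarrow> real) \<Rightarrow> bool" where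
  "Cinf_on U f \<longleftrightarrow> (\<forall>is. continuous_on U (iter_pd is f) \<and>
     (\<forall>i. \<forall>x\<in>U. (\<lambda>t. iter_pd is f (x + t *\<^sub>R axis i 1)) differentiable (at 0)))"

definition riemannian_metric_on :: "(real^'a::finite) set \<Rightarrow> (real^'a \<Rightarrow> real^'a^'a) \<Rightarrow> bool" where
  "riemannian_metric_on U G \<longleftrightarrow>
     (\<forall>a b. Cinf_on U (\<lambda>x. G x $ a $ b)) \<and>
     (\<forall>x\<in>U. transpose (G x) = G x \<and> (\<forall>v. v \<noteq> 0 \<longrightarrow> v \<bullet> (G x *v v) > 0))"

text \<open>Christoffel symbols of the Levi-Civita connection: christoffel G x k i j = Gamma^k_{ij}.\<close>
definition christoffel :: "(real^'a::finite \<Rightarrow> real^'a^'a) \<Rightarrow> real^'a \<Rightarrow> 'a \<Rightarrow> 'a \<Rightarrow> 'a \<Rightarrow> real" where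
  "christoffel G x k i j = (1/2) * (\<Sum>l\<in>UNIV. matrix_inv (G x) $ k $ l *
      (pd i (\<lambda>y. G y $ j $ l) x + pd j (\<lambda>y. G y $ i $ l) x - pd l (\<lambda>y. G y $ i $ j) x))"

definition anti_paraKaehler ::
  "(real^'n::finite) set \<Rightarrow> (real^'n \<Rightarrow> real^'n^'n) \<Rightarrow> (real^'n \<Rightarrow> real^'n^'n) \<Rightarrow> nat \<Rightarrow> bool" where
  "anti_paraKaehler U g phi k \<longleftrightarrow>
     CARD('n) = 2 * k \<and> riemannian_metric_on U g \<and>
     (\<forall>a b. Cinf_on U (\<lambda>x. phi x $ a $ b)) \<and>
     (\<forall>x\<in>U. phi x ** phi x = mat 1 \<and>
        dim {v. phi x *v v = v} = k \<and> dim {v. phi x *v v = - v} = k \<and>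
        (\<forall>X Y. (phi x *v X) \<bullet> (g x *v Y) = X \<bullet> (g x *v (phi x *v Y))) \<and>
        (\<forall>i a b. pd i (\<lambda>y. phi y $ a $ b) x
                 + (\<Sum>c\<in>UNIV. christoffel g x a i c * phi x $ c $ b)
                 - (\<Sum>c\<in>UNIV. christoffel g x c i b * phi x $ a $ c) = 0))"

definition xpart :: "real^('n::finite + 'n) \<Rightarrow> real^'n" where
  "xpart z = (\<chi> i. z $ Inl i)"

definition ypart :: "real^('n::finite + 'n) \<Rightarrow> real^'n" where
  "ypart z = (\<chi> i. z $ Inr i)"

definition tvec :: "real^'n::finite \<Rightarrow> real^'n \<Rightarrow> real^('n + 'n)" where
  "tvec a b = (\<chi> \<alpha>. case \<alpha> of Inl i \<Rightarrow> a $ i | Inr i \<Rightarrow> b $ i)"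

text \<open>A coordinate tangent vector W = a^i d/dx^i + b^i d/dy^i at z = (x,y) equals
  a^H + v^V with v^k = b^k + Gamma^k_{ij}(x) a^i y^j (horizontal lift w.r.t. Levi-Civita).\<close>
definition vcomp :: "(real^'n::finite \<Rightarrow> real^'n^'n) \<Rightarrow> real^('n + 'n) \<Rightarrow> real^('n + 'n) \<Rightarrow> real^'n" where
  "vcomp g z W = (\<chi> k. ypart W $ k +
      (\<Sum>i\<in>UNIV. \<Sum>j\<in>UNIV. christoffel g (xpart z) k i j * xpart W $ i * ypart z $ j))"

definition gBS_form ::
  "(real^'n::finite \<Rightarrow> real^'n^'n) \<Rightarrow> (real^'n \<Rightarrow> real^'n^'n) \<Rightarrow> real \<Rightarrow>
   real^('n + 'n) \<Rightarrow> real^('n + 'n) \<Rightarrow> real^('n + 'n) \<Rightarrow> real" where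
  "gBS_form g phi \<delta> z W W' =
     (let x = xpart z; v = vcomp g z W; v' = vcomp g z W'; pu = phi x *v ypart z in
      xpart W \<bullet> (g x *v xpart W') + v \<bullet> (g x *v v')
      + \<delta>\<^sup>2 * (v \<bullet> (g x *v pu)) * (v' \<bullet> (g x *v pu)))"

definition gBS ::
  "(real^'n::finite \<Rightarrow> real^'n^'n) \<Rightarrow> (real^'n \<Rightarrow> real^'n^'n) \<Rightarrow> real \<Rightarrow>
   real^('n + 'n) \<Rightarrow> real^('n + 'n)^('n + 'n)" where
  "gBS g phi \<delta> z = (\<chi> \<alpha> \<beta>. gBS_form g phi \<delta> z (axis \<alpha> 1) (axis \<beta> 1))"

definition section_map :: "(real^'n::finite \<Rightarrow> real^'n) \<Rightarrow> real^'n \<Rightarrow> real^('n + 'n)" where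
  "section_map \<xi> x = tvec x (\<xi> x)"

definition smooth_vector_field :: "(real^'n::finite) set \<Rightarrow> (real^'n \<Rightarrow> real^'n) \<Rightarrow> bool" where
  "smooth_vector_field U \<xi> \<longleftrightarrow> (\<forall>i. Cinf_on U (\<lambda>x. \<xi> x $ i))"

definition dmap :: "(real^'n::finite \<Rightarrow> real^'m::finite) \<Rightarrow> real^'n \<Rightarrow> 'n \<Rightarrow> real^'m" where
  "dmap F x i = (\<chi> \<gamma>. pd i (\<lambda>y. F y $ \<gamma>) x)"

definition isometric_immersion ::
  "(real^'n::finite) set \<Rightarrow> (real^'n \<Rightarrow> real^'n^'n) \<Rightarrow> (real^'m::finite \<Rightarrow> real^'m^'m) \<Rightarrow>
   (real^'n \<Rightarrow> real^'m) \<Rightarrow> bool" where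
  "isometric_immersion U g G F \<longleftrightarrow>
     (\<forall>x\<in>U. \<forall>i j. dmap F x i \<bullet> (G (F x) *v dmap F x j) = g x $ i $ j)"

definition sff ::
  "(real^'n::finite \<Rightarrow> real^'n^'n) \<Rightarrow> (real^'m::finite \<Rightarrow> real^'m^'m) \<Rightarrow>
   (real^'n \<Rightarrow> real^'m) \<Rightarrow> real^'n \<Rightarrow> 'n \<Rightarrow> 'n \<Rightarrow> 'm \<Rightarrow> real" where
  "sff g G F x i j \<gamma> =
     pd i (\<lambda>y. pd j (\<lambda>y'. F y' $ \<gamma>) y) x
     - (\<Sum>k\<in>UNIV. christoffel g x k i j * pd k (\<lambda>y. F y $ \<gamma>) x)
     + (\<Sum>\<alpha>\<in>UNIV. \<Sum>\<beta>\<in>UNIV. christoffel G (F x) \<gamma> \<alpha> \<beta> * dmap F x i $ \<alpha> * dmap F x j $ \<beta>)"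

definition tension ::
  "(real^'n::finite \<Rightarrow> real^'n^'n) \<Rightarrow> (real^'m::finite \<Rightarrow> real^'m^'m) \<Rightarrow>
   (real^'n \<Rightarrow> real^'m) \<Rightarrow> real^'n \<Rightarrow> 'm \<Rightarrow> real" where
  "tension g G F x \<gamma> = (\<Sum>i\<in>UNIV. \<Sum>j\<in>UNIV. matrix_inv (g x) $ i $ j * sff g G F x i j \<gamma>)"

definition totally_geodesic ::
  "(real^'n::finite) set \<Rightarrow> (real^'n \<Rightarrow> real^'n^'n) \<Rightarrow> (real^'m::finite \<Rightarrow> real^'m^'m) \<Rightarrow>
   (real^'n \<Rightarrow> real^'m) \<Rightarrow> bool" where
  "totally_geodesic U g G F \<longleftrightarrow> (\<forall>x\<in>U. \<forall>i j \<gamma>. sff g G F x i j \<gamma> = 0)"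

definition harmonic_map ::
  "(real^'n::finite) set \<Rightarrow> (real^'n \<Rightarrow> real^'n^'n) \<Rightarrow> (real^'m::finite \<Rightarrow> real^'m^'m) \<Rightarrow>
   (real^'n \<Rightarrow> real^'m) \<Rightarrow> bool" where
  "harmonic_map U g G F \<longleftrightarrow> (\<forall>x\<in>U. \<forall>\<gamma>. tension g G F x \<gamma> = 0)"

end

theory Submission
  imports Defs
begin

text \<open>The isometry condition reads g(X,X) + h(v, v) = g(X,X), where v is the vertical part of
  d xi(X), i.e. nabla_X xi, and h is the positive definite Berger fibre metric. Hence xi is
  parallel and d xi sends every X to its horizontal lift X^H. For horizontal lifts of coordinate
  fields the Koszul formula for g_BS splits into a base part, the Christoffel symbols of g, and a
  fibre part, the second derivatives of the parallel field xi, which are symmetric by Schwarz's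
  theorem. Together they cancel the coordinate Hessian of the section exactly, so the second
  fundamental form vanishes, and with it its trace, the tension field.\<close>

lemma pd_eqI: "((\<lambda>t. f (x + t *\<^sub>R axis i 1)) has_real_derivative D) (at 0) \<Longrightarrow> pd i f x = D"
  by (simp add: pd_def DERIV_imp_deriv)

lemma pd_const [simp]: "pd i (\<lambda>y. c) x = 0"
  by (rule pd_eqI) simp

lemma pd_coordinate: "pd i (\<lambda>y. y $ a) x = (if a = i then 1 else 0)"
proof (rule pd_eqI)
  show "((\<lambda>t. (x + t *\<^sub>R axis i 1) $ a) has_real_derivative (if a = i then 1 else 0)) (at 0)"
    by (auto intro!: derivative_eq_intros simp: axis_def)
qed

lemma eventually_line_in_open:
  fixes U :: "(real^'n::finite) set"
  assumes "open U" "x \<in> U"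
  shows "\<forall>\<^sub>F t in nhds (0::real). x + t *\<^sub>R v \<in> U"
proof -
  have "open ((\<lambda>t::real. x + t *\<^sub>R v) -` U)"
    by (rule continuous_open_vimage[OF assms(1)]) (intro continuous_intros)
  moreover have "0 \<in> (\<lambda>t::real. x + t *\<^sub>R v) -` U" using assms(2) by simp
  ultimately show ?thesis unfolding eventually_nhds by blast
qed

lemma pd_cong_open:
  fixes U :: "(real^'n::finite) set"
  assumes "open U" "x \<in> U" "\<And>y. y \<in> U \<Longrightarrow> f y = h y"
  shows "pd i f x = pd i h x"
  unfolding pd_def
proof (rule deriv_cong_ev)
  show "\<forall>\<^sub>F t in nhds 0. f (x + t *\<^sub>R axis i 1) = h (x + t *\<^sub>R axis i 1)"
    using eventually_line_in_open[OF assms(1,2), of "axis i 1"] by (rule eventually_mono) (simp add: assms(3))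
qed simp

lemma Cinf_on_DERIV_iter_pd:
  assumes "Cinf_on U f" "x \<in> U"
  shows "((\<lambda>t. iter_pd is f (x + t *\<^sub>R axis i 1)) has_real_derivative pd i (iter_pd is f) x) (at 0)"
  using assms unfolding Cinf_on_def pd_def by (simp add: DERIV_deriv_iff_real_differentiable)

corollary Cinf_on_DERIV_pd:
  assumes "Cinf_on U f" "x \<in> U"
  shows "((\<lambda>t. f (x + t *\<^sub>R axis i 1)) has_real_derivative pd i f x) (at 0)"
  using Cinf_on_DERIV_iter_pd[OF assms, of "[]"] by simp

corollary Cinf_on_DERIV_pd_pd:
  assumes "Cinf_on U f" "x \<in> U"
  shows "((\<lambda>t. pd j f (x + t *\<^sub>R axis i 1)) has_real_derivative pd i (pd j f) x) (at 0)"
  using Cinf_on_DERIV_iter_pd[OF assms, of "[j]"] by simp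

lemma Cinf_on_continuous_pd_pd:
  assumes "Cinf_on U f"
  shows "continuous_on U (pd i (pd j f))"
  using assms unfolding Cinf_on_def by (metis iter_pd.simps)

lemma DERIV_line_shift:
  fixes e x :: "'a::real_normed_vector"
  assumes "((\<lambda>s. F ((x + t *\<^sub>R e) + s *\<^sub>R e)) has_real_derivative D) (at 0)"
  shows "((\<lambda>s. F (x + s *\<^sub>R e)) has_real_derivative D) (at t)"
proof -
  have "x + (s + t) *\<^sub>R e = x + t *\<^sub>R e + s *\<^sub>R e" for s
    by (simp add: algebra_simps)
  then have "((\<lambda>s. F (x + (s + t) *\<^sub>R e)) has_real_derivative D) (at 0)"
    using assms by presburger
  then show ?thesis using DERIV_shift[of "\<lambda>s. F (x + s *\<^sub>R e)" D 0 t] by simp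
qed

lemma Cinf_on_DERIV_pd_at:
  assumes "Cinf_on U f" "x + t *\<^sub>R axis i 1 \<in> U"
  shows "((\<lambda>s. f (x + s *\<^sub>R axis i 1)) has_real_derivative pd i f (x + t *\<^sub>R axis i 1)) (at t)"
  by (rule DERIV_line_shift) (rule Cinf_on_DERIV_pd[OF assms])

lemma second_difference_mvt:
  fixes f :: "real^'n::finite \<Rightarrow> real"
  assumes C: "Cinf_on U f" and h: "0 < h"
    and square: "\<And>s t. 0 \<le> s \<Longrightarrow> s \<le> h \<Longrightarrow> 0 \<le> t \<Longrightarrow> t \<le> h \<Longrightarrow>
              x0 + s *\<^sub>R axis i 1 + t *\<^sub>R axis j 1 \<in> U"
  shows "\<exists>s t. 0 < s \<and> s < h \<and> 0 < t \<and> t < h \<and>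
     f (x0 + h *\<^sub>R axis i 1 + h *\<^sub>R axis j 1) - f (x0 + h *\<^sub>R axis i 1)
       - f (x0 + h *\<^sub>R axis j 1) + f x0
     = h * h * pd j (pd i f) (x0 + s *\<^sub>R axis i 1 + t *\<^sub>R axis j 1)"
proof -
  define e1 where "e1 = axis i (1::real)"
  define e2 where "e2 = axis j (1::real)"
  define \<phi> where "\<phi> u = f (x0 + h *\<^sub>R e2 + u *\<^sub>R e1) - f (x0 + u *\<^sub>R e1)" for u
  have "(\<phi> has_real_derivative pd i f (x0 + h *\<^sub>R e2 + u *\<^sub>R e1) - pd i f (x0 + u *\<^sub>R e1)) (at u)"
    if "0 \<le> u" "u \<le> h" for u
    unfolding \<phi>_def e1_def using that h square[of u h] square[of u 0]
    by (intro DERIV_diff Cinf_on_DERIV_pd_at[OF C]) (simp_all add: e2_def algebra_simps)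
  then obtain s where s: "0 < s" "s < h"
    "\<phi> h - \<phi> 0 = h * (pd i f (x0 + h *\<^sub>R e2 + s *\<^sub>R e1) - pd i f (x0 + s *\<^sub>R e1))"
    using MVT2[OF h, of \<phi> "\<lambda>u. pd i f (x0 + h *\<^sub>R e2 + u *\<^sub>R e1) - pd i f (x0 + u *\<^sub>R e1)"]
    by auto
  define \<psi> where "\<psi> w = pd i f (x0 + s *\<^sub>R e1 + w *\<^sub>R e2)" for w
  have "(\<psi> has_real_derivative pd j (pd i f) (x0 + s *\<^sub>R e1 + w *\<^sub>R e2)) (at w)"
    if "0 \<le> w" "w \<le> h" for w
    unfolding \<psi>_def e2_def
  proof (rule DERIV_line_shift)
    show "((\<lambda>r. pd i f (x0 + s *\<^sub>R e1 + w *\<^sub>R axis j 1 + r *\<^sub>R axis j 1)) has_real_derivative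
        pd j (pd i f) (x0 + s *\<^sub>R e1 + w *\<^sub>R axis j 1)) (at 0)"
      using Cinf_on_DERIV_pd_pd[OF C, of "x0 + s *\<^sub>R e1 + w *\<^sub>R axis j 1" i j] square[of s w] that s
      by (simp add: e1_def)
  qed
  then obtain t where t: "0 < t" "t < h"
    "\<psi> h - \<psi> 0 = h * pd j (pd i f) (x0 + s *\<^sub>R e1 + t *\<^sub>R e2)"
    using MVT2[OF h, of \<psi> "\<lambda>w. pd j (pd i f) (x0 + s *\<^sub>R e1 + w *\<^sub>R e2)"] by auto
  have "f (x0 + h *\<^sub>R e1 + h *\<^sub>R e2) - f (x0 + h *\<^sub>R e1) - f (x0 + h *\<^sub>R e2) + f x0 = \<phi> h - \<phi> 0"
    unfolding \<phi>_def by (simp add: algebra_simps)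
  also have "\<dots> = h * (\<psi> h - \<psi> 0)" using s(3) unfolding \<psi>_def by (simp add: algebra_simps)
  also have "\<dots> = h * h * pd j (pd i f) (x0 + s *\<^sub>R e1 + t *\<^sub>R e2)" using t(3) by simp
  finally show ?thesis using s t unfolding e1_def e2_def by blast
qed

lemma dist_axis_steps:
  assumes "0 \<le> s" "0 \<le> t"
  shows "dist (x0 + s *\<^sub>R axis k 1 + t *\<^sub>R axis l 1) (x0 :: real^'n::finite) \<le> s + t"
proof -
  have "dist (x0 + s *\<^sub>R axis k 1 + t *\<^sub>R axis l 1) x0 = norm (s *\<^sub>R axis k (1::real) + t *\<^sub>R axis l 1)"
    by (simp add: dist_norm)
  also have "\<dots> \<le> norm (s *\<^sub>R axis k (1::real)) + norm (t *\<^sub>R axis l (1::real))"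
    by (rule norm_triangle_ineq)
  finally show ?thesis using assms by simp
qed

text \<open>Schwarz's theorem: by the mean value theorem both mixed partials are limits of the same
  second difference quotients.\<close>
lemma Cinf_on_pd_commute:
  fixes f :: "real^'n::finite \<Rightarrow> real"
  assumes U: "open U" and x0: "x0 \<in> U" and C: "Cinf_on U f"
  shows "pd i (pd j f) x0 = pd j (pd i f) x0"
proof (rule ccontr)
  define a where "a = pd j (pd i f) x0"
  define b where "b = pd i (pd j f) x0"
  define e where "e = \<bar>a - b\<bar> / 2"
  assume "pd i (pd j f) x0 \<noteq> pd j (pd i f) x0"
  then have e: "e > 0" unfolding e_def a_def b_def by simp
  obtain r where r: "r > 0" "ball x0 r \<subseteq> U" using U x0 open_contains_ball by blast
  have "isCont (pd j (pd i f)) x0" "isCont (pd i (pd j f)) x0"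
    using Cinf_on_continuous_pd_pd[OF C] U x0 continuous_on_eq_continuous_at by blast+
  then obtain d1 d2 where d1: "d1 > 0" "\<And>y. dist y x0 < d1 \<Longrightarrow> dist (pd j (pd i f) y) a < e"
    and d2: "d2 > 0" "\<And>y. dist y x0 < d2 \<Longrightarrow> dist (pd i (pd j f) y) b < e"
    unfolding continuous_at_eps_delta a_def b_def using e by metis
  define h where "h = min r (min d1 d2) / 3"
  have h: "h > 0" "2 * h < r" "2 * h < d1" "2 * h < d2" using r d1 d2 unfolding h_def by auto
  have square: "x0 + s *\<^sub>R axis k 1 + t *\<^sub>R axis l 1 \<in> U"
    if "0 \<le> s" "s \<le> h" "0 \<le> t" "t \<le> h" for s t and k l :: 'n
    using dist_axis_steps[of s t x0 k l] that h r(2) by (auto simp: dist_commute)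
  obtain s1 t1 where st1: "0 < s1" "s1 < h" "0 < t1" "t1 < h"
    "f (x0 + h *\<^sub>R axis i 1 + h *\<^sub>R axis j 1) - f (x0 + h *\<^sub>R axis i 1)
       - f (x0 + h *\<^sub>R axis j 1) + f x0
     = h * h * pd j (pd i f) (x0 + s1 *\<^sub>R axis i 1 + t1 *\<^sub>R axis j 1)"
    using second_difference_mvt[OF C h(1) square] by blast
  obtain s2 t2 where st2: "0 < s2" "s2 < h" "0 < t2" "t2 < h"
    "f (x0 + h *\<^sub>R axis j 1 + h *\<^sub>R axis i 1) - f (x0 + h *\<^sub>R axis j 1)
       - f (x0 + h *\<^sub>R axis i 1) + f x0
     = h * h * pd i (pd j f) (x0 + s2 *\<^sub>R axis j 1 + t2 *\<^sub>R axis i 1)"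
    using second_difference_mvt[OF C h(1) square] by blast
  define c where "c = pd j (pd i f) (x0 + s1 *\<^sub>R axis i 1 + t1 *\<^sub>R axis j 1)"
  have c: "c = pd i (pd j f) (x0 + s2 *\<^sub>R axis j 1 + t2 *\<^sub>R axis i 1)"
    using st1(5) st2(5) h(1) unfolding c_def by (simp add: algebra_simps)
  have "dist a c < e"
    using d1(2) dist_axis_steps[of s1 t1 x0 i j] st1 h unfolding c_def by (simp add: dist_commute)
  moreover have "dist b c < e"
    using d2(2) dist_axis_steps[of s2 t2 x0 j i] st2 h unfolding c by (simp add: dist_commute)
  ultimately have "dist a b < \<bar>a - b\<bar>"
    unfolding e_def by (rule dist_triangle_half_l)
  then show False by (simp add: dist_real_def)
qed

lemma posdef_invertible:
  fixes M :: "real^'m::finite^'m"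
  assumes "\<forall>w. w \<noteq> 0 \<longrightarrow> w \<bullet> (M *v w) > 0"
  shows "invertible M"
proof -
  have "inj ((*v) M)"
  proof (rule injI)
    fix w w' assume "M *v w = M *v w'"
    then have "M *v (w - w') = 0" by (simp add: matrix_vector_mult_diff_distrib)
    then show "w = w'" using assms by (metis inner_zero_right less_irrefl right_minus_eq)
  qed
  then show ?thesis
    using det_nz_iff_inj[OF matrix_vector_mul_linear[of M]]
    by (simp add: invertible_det_nz)
qed

lemma matrix_inv_left_right:
  assumes "invertible (A::'a::semiring_1^'n^'m)"
  shows matrix_inv_right: "A ** matrix_inv A = mat 1"
    and matrix_inv_left: "matrix_inv A ** A = mat 1"
proof -
  have "\<exists>A'. A ** A' = mat 1 \<and> A' ** A = mat 1" using assms unfolding invertible_def by blast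
  then have "A ** matrix_inv A = mat 1 \<and> matrix_inv A ** A = mat 1"
    unfolding matrix_inv_def by (rule someI_ex)
  then show "A ** matrix_inv A = mat 1" "matrix_inv A ** A = mat 1" by auto
qed

lemma matrix_inv_cramer:
  assumes "invertible (A::real^'m::finite^'m)"
  shows "matrix_inv A $ k $ l = det (\<chi> r s. if s = k then axis l 1 $ r else A$r$s) / det A"
proof -
  have "A *v (matrix_inv A *v axis l 1) = axis l 1"
    by (simp add: matrix_vector_mul_assoc matrix_inv_right[OF assms])
  then have "matrix_inv A *v axis l 1 = (\<chi> k. det (\<chi> r s. if s = k then axis l 1 $ r else A$r$s) / det A)"
    using cramer assms invertible_det_nz by blast
  then have "(matrix_inv A *v axis l 1) $ k = det (\<chi> r s. if s = k then axis l 1 $ r else A$r$s) / det A"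
    by simp
  then show ?thesis by (simp add: matrix_vector_mult_basis column_def)
qed

lemma differentiable_prod:
  fixes f :: "'i \<Rightarrow> real \<Rightarrow> real"
  assumes "finite I" "\<And>i. i \<in> I \<Longrightarrow> f i differentiable (at x)"
  shows "(\<lambda>t. \<Prod>i\<in>I. f i t) differentiable (at x)"
  using assms by (induction I rule: finite_induct) simp_all

lemma det_differentiable:
  fixes M :: "real \<Rightarrow> real^'m::finite^'m"
  assumes "\<And>r s. (\<lambda>t. M t $ r $ s) differentiable (at x)"
  shows "(\<lambda>t. det (M t)) differentiable (at x)"
  unfolding det_def
  by (intro differentiable_sum differentiable_mult differentiable_const differentiable_prod assms
      ballI) (simp_all add: finite_permutations)

lemma real_differentiable_cong_ev:
  fixes f h :: "real \<Rightarrow> real"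
  assumes "f differentiable (at x)" "\<forall>\<^sub>F t in nhds x. f t = h t"
  shows "h differentiable (at x)"
  using assms DERIV_cong_ev[OF refl assms(2) refl] unfolding real_differentiable_def by blast

lemma riemannian_metric_on_props:
  assumes "riemannian_metric_on U g" "x \<in> U"
  shows riemannian_metric_on_sym: "transpose (g x) = g x"
    and riemannian_metric_on_posdef: "\<forall>v. v \<noteq> 0 \<longrightarrow> v \<bullet> (g x *v v) > 0"
    and riemannian_metric_on_invertible: "invertible (g x)"
  using assms posdef_invertible unfolding riemannian_metric_on_def by blast+

lemma riemannian_metric_on_Cinf: "riemannian_metric_on U g \<Longrightarrow> Cinf_on U (\<lambda>x. g x $ a $ b)"
  unfolding riemannian_metric_on_def by blast

text \<open>The inverse metric is smooth along coordinate lines because of Cramer's rule.\<close>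
lemma matrix_inv_metric_differentiable:
  assumes U: "open U" and R: "riemannian_metric_on U g" and x: "x \<in> U"
  shows "(\<lambda>t. matrix_inv (g (x + t *\<^sub>R axis c 1)) $ k $ l) differentiable (at 0)"
proof -
  let ?g = "\<lambda>t. g (x + t *\<^sub>R axis c 1)"
  define M where "M t = (\<chi> r s. if s = k then axis l 1 $ r else ?g t $ r $ s)" for t
  have g_diff: "(\<lambda>t. ?g t $ r $ s) differentiable (at 0)" for r s
    using Cinf_on_DERIV_pd[OF riemannian_metric_on_Cinf[OF R] x] real_differentiable_def by blast
  have "(\<lambda>t. M t $ r $ s) differentiable (at 0)" for r s
    using g_diff by (cases "s = k") (simp_all add: M_def)
  then have "(\<lambda>t. det (M t) / det (?g t)) differentiable (at 0)"
    using riemannian_metric_on_invertible[OF R x]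
    by (intro differentiable_divide det_differentiable g_diff) (simp_all add: invertible_det_nz)
  moreover have "\<forall>\<^sub>F t in nhds 0. det (M t) / det (?g t) = matrix_inv (?g t) $ k $ l"
    using eventually_line_in_open[OF U x, of "axis c 1"]
    by (rule eventually_mono)
      (simp add: M_def matrix_inv_cramer riemannian_metric_on_invertible[OF R])
  ultimately show ?thesis by (rule real_differentiable_cong_ev)
qed

lemma christoffel_DERIV:
  assumes U: "open U" and R: "riemannian_metric_on U g" and x: "x \<in> U"
  shows "((\<lambda>t. christoffel g (x + t *\<^sub>R axis c 1) k i j) has_real_derivative
           pd c (\<lambda>y. christoffel g y k i j) x) (at 0)"
proof -
  have "(\<lambda>t. pd a (\<lambda>y. g y $ r $ s) (x + t *\<^sub>R axis c 1)) differentiable (at 0)" for a r s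
    using Cinf_on_DERIV_pd_pd[OF riemannian_metric_on_Cinf[OF R] x] real_differentiable_def by blast
  then have "(\<lambda>t. christoffel g (x + t *\<^sub>R axis c 1) k i j) differentiable (at 0)"
    unfolding christoffel_def
    by (intro differentiable_mult differentiable_const differentiable_sum ballI finite_UNIV
        differentiable_diff differentiable_add matrix_inv_metric_differentiable[OF U R x]) simp_all
  then show ?thesis unfolding pd_def by (simp add: DERIV_deriv_iff_real_differentiable)
qed

lemma metric_christoffel_contract:
  assumes R: "riemannian_metric_on U g" and x: "x \<in> U"
  shows "(\<Sum>a\<in>UNIV. g x $ m $ a * christoffel g x a i j)
     = (1/2) * (pd i (\<lambda>y. g y $ j $ m) x + pd j (\<lambda>y. g y $ i $ m) x - pd m (\<lambda>y. g y $ i $ j) x)"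
proof -
  define S where "S l = pd i (\<lambda>y. g y $ j $ l) x + pd j (\<lambda>y. g y $ i $ l) x - pd l (\<lambda>y. g y $ i $ j) x" for l
  have "(\<Sum>a\<in>UNIV. g x $ m $ a * christoffel g x a i j)
      = (\<Sum>a\<in>UNIV. \<Sum>l\<in>UNIV. (1/2) * (g x $ m $ a * matrix_inv (g x) $ a $ l * S l))"
    unfolding christoffel_def S_def by (simp add: sum_distrib_left mult_ac)
  also have "\<dots> = (\<Sum>l\<in>UNIV. \<Sum>a\<in>UNIV. (1/2) * (g x $ m $ a * matrix_inv (g x) $ a $ l * S l))"
    by (rule sum.swap)
  also have "\<dots> = (1/2) * (\<Sum>l\<in>UNIV. (\<Sum>a\<in>UNIV. g x $ m $ a * matrix_inv (g x) $ a $ l) * S l)"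
    by (simp add: sum_distrib_left sum_distrib_right)
  also have "\<dots> = (1/2) * (\<Sum>l\<in>UNIV. (mat 1 :: real^'a^'a) $ m $ l * S l)"
    unfolding matrix_inv_right[OF riemannian_metric_on_invertible[OF R x], symmetric]
    by (simp add: matrix_matrix_mult_def)
  also have "\<dots> = (1/2) * S m"
  proof -
    have "(mat 1 :: real^'a^'a) $ m $ l * S l = (if m = l then S l else 0)" for l
      by (simp add: mat_def)
    then show ?thesis by simp
  qed
  finally show ?thesis unfolding S_def .
qed

lemma tvec_nth_Inl [simp]: "tvec a b $ Inl i = a $ i" by (simp add: tvec_def)
lemma tvec_nth_Inr [simp]: "tvec a b $ Inr i = b $ i" by (simp add: tvec_def)
lemma xpart_tvec [simp]: "xpart (tvec a b) = a" by (simp add: xpart_def tvec_def vec_eq_iff)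
lemma ypart_tvec [simp]: "ypart (tvec a b) = b" by (simp add: ypart_def tvec_def vec_eq_iff)
lemma xpart_add [simp]: "xpart (W + W') = xpart W + xpart W'" by (simp add: xpart_def vec_eq_iff)
lemma ypart_add [simp]: "ypart (W + W') = ypart W + ypart W'" by (simp add: ypart_def vec_eq_iff)
lemma xpart_scaleR [simp]: "xpart (c *\<^sub>R W) = c *\<^sub>R xpart W" by (simp add: xpart_def vec_eq_iff)
lemma ypart_scaleR [simp]: "ypart (c *\<^sub>R W) = c *\<^sub>R ypart W" by (simp add: ypart_def vec_eq_iff)
lemma xpart_axis_Inl [simp]: "xpart (axis (Inl a) 1 :: real^('n::finite+'n)) = axis a 1"
  by (simp add: xpart_def vec_eq_iff axis_def)
lemma xpart_axis_Inr [simp]: "xpart (axis (Inr a) 1 :: real^('n::finite+'n)) = 0"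
  by (simp add: xpart_def vec_eq_iff axis_def)
lemma ypart_axis_Inl [simp]: "ypart (axis (Inl a) 1 :: real^('n::finite+'n)) = 0"
  by (simp add: ypart_def vec_eq_iff axis_def)
lemma ypart_axis_Inr [simp]: "ypart (axis (Inr a) 1 :: real^('n::finite+'n)) = axis a 1"
  by (simp add: ypart_def vec_eq_iff axis_def)

lemma xpart_zero [simp]: "xpart 0 = 0" by (simp add: xpart_def vec_eq_iff)
lemma ypart_zero [simp]: "ypart 0 = 0" by (simp add: ypart_def vec_eq_iff)

lemma xpart_ypart_eq_0_iff: "W = 0 \<longleftrightarrow> xpart W = 0 \<and> ypart W = 0"
proof
  assume "xpart W = 0 \<and> ypart W = 0"
  then have "W $ Inl i = 0" "W $ Inr i = 0" for i
    by (simp_all add: xpart_def ypart_def vec_eq_iff)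
  then show "W = 0"
    unfolding vec_eq_iff by (metis sum.exhaust zero_index)
qed simp

lemma sum_UNIV_Plus:
  "(\<Sum>a\<in>(UNIV::('a::finite + 'b::finite) set). f a) = (\<Sum>a\<in>UNIV. f (Inl a)) + (\<Sum>b\<in>UNIV. f (Inr b))"
  using sum.Plus[of "UNIV::'a set" "UNIV::'b set" f] by (simp add: o_def)

lemma sum_mult_axis [simp]: "(\<Sum>a\<in>UNIV. f a * (axis i (1::real) $ a)) = f i"
proof -
  have "f a * (axis i (1::real) $ a) = (if a = i then f i else 0)" for a by (simp add: axis_def)
  then show ?thesis by simp
qed

lemma sum_axis_mult [simp]: "(\<Sum>a\<in>UNIV. (axis i (1::real) $ a) * f a) = f i"
  using sum_mult_axis[of f i] by (simp add: mult.commute)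

lemma sum_mult_axis_mult [simp]: "(\<Sum>a\<in>UNIV. f a * (axis i (1::real) $ a) * c) = f i * c"
  using sum_mult_axis[of "\<lambda>a. f a * c" i] by (simp add: mult_ac)

lemma inner_axis_mult_axis: "axis a 1 \<bullet> (M *v axis b (1::real)) = M $ a $ b"
  by (simp add: inner_axis' matrix_vector_mult_basis column_def)

text \<open>The vertical component vcomp with the Christoffel symbols abstracted to C, so that they can
  be varied along coordinate lines.\<close>
definition vert :: "('n::finite \<Rightarrow> 'n \<Rightarrow> 'n \<Rightarrow> real) \<Rightarrow> real^'n \<Rightarrow> real^('n+'n) \<Rightarrow> real^'n" where
  "vert C y P = (\<chi> k. ypart P $ k + (\<Sum>a\<in>UNIV. \<Sum>b\<in>UNIV. C k a b * xpart P $ a * y $ b))"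

definition berger_fibre :: "real^'n::finite^'n \<Rightarrow> real^'n \<Rightarrow> real \<Rightarrow> real^'n \<Rightarrow> real^'n \<Rightarrow> real" where
  "berger_fibre G S \<delta> u w = u \<bullet> (G *v w) + \<delta>\<^sup>2 * (u \<bullet> S) * (w \<bullet> S)"

text \<open>The Berger type deformed Sasaki metric as a function of the pointwise data
  G = g(x), C = Gamma(x), \<Phi> = phi(x) and the fibre coordinate y, so that it can be
  differentiated along coordinate lines by the product rule.\<close>
definition berger_sasaki ::
  "real \<Rightarrow> real^'n::finite^'n \<Rightarrow> ('n \<Rightarrow> 'n \<Rightarrow> 'n \<Rightarrow> real) \<Rightarrow> real^'n^'n \<Rightarrow> real^'n
   \<Rightarrow> real^('n+'n) \<Rightarrow> real^('n+'n) \<Rightarrow> real" where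
  "berger_sasaki \<delta> G C \<Phi> y P Q =
     xpart P \<bullet> (G *v xpart Q) + berger_fibre G (G *v (\<Phi> *v y)) \<delta> (vert C y P) (vert C y Q)"

lemma gBS_form_eq_berger_sasaki:
  "gBS_form g phi \<delta> z P Q =
     berger_sasaki \<delta> (g (xpart z)) (christoffel g (xpart z)) (phi (xpart z)) (ypart z) P Q"
  by (simp add: gBS_form_def berger_sasaki_def berger_fibre_def Let_def vcomp_def vert_def)

lemma vert_tvec_axis:
  "vert C y (tvec (axis j 1) b) = (\<chi> k. b $ k + (\<Sum>c\<in>UNIV. C k j c * y $ c))"
proof -
  have "(\<Sum>a\<in>UNIV. \<Sum>c\<in>UNIV. C k a c * axis j 1 $ a * y $ c) = (\<Sum>c\<in>UNIV. C k j c * y $ c)" for k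
    by (subst sum.swap) simp
  then show ?thesis by (simp add: vert_def)
qed

lemma vert_vertical: "xpart W = 0 \<Longrightarrow> vert C y W = ypart W"
  by (simp add: vert_def vec_eq_iff)

lemma vert_add: "vert C y (P + Q) = vert C y P + vert C y Q"
  by (simp add: vert_def vec_eq_iff algebra_simps sum.distrib)

lemma vert_scaleR: "vert C y (c *\<^sub>R P) = c *\<^sub>R vert C y P"
  by (simp add: vert_def vec_eq_iff algebra_simps sum_distrib_left)

lemma berger_fibre_add_left: "berger_fibre G S \<delta> (u + u') w = berger_fibre G S \<delta> u w + berger_fibre G S \<delta> u' w"
  by (simp add: berger_fibre_def algebra_simps)

lemma berger_fibre_scaleR_left: "berger_fibre G S \<delta> (c *\<^sub>R u) w = c * berger_fibre G S \<delta> u w"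
  by (simp add: berger_fibre_def algebra_simps)

lemma berger_fibre_sum_left:
  "berger_fibre G S \<delta> (\<Sum>c\<in>A. f c *\<^sub>R v c) w = (\<Sum>c\<in>A. f c * berger_fibre G S \<delta> (v c) w)"
proof -
  have "linear (\<lambda>u. berger_fibre G S \<delta> u w)"
    by (rule linearI) (simp_all add: berger_fibre_add_left berger_fibre_scaleR_left)
  from linear_sum[OF this, of "\<lambda>c. f c *\<^sub>R v c" A] show ?thesis
    by (simp add: berger_fibre_scaleR_left)
qed

lemma berger_fibre_commute:
  assumes "transpose G = G"
  shows "berger_fibre G S \<delta> u w = berger_fibre G S \<delta> w u"
proof -
  have "u \<bullet> (G *v w) = (transpose G *v u) \<bullet> w"
    by (simp add: dot_lmul_matrix[symmetric])
  then show ?thesis using assms by (simp add: berger_fibre_def inner_commute)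
qed

lemma berger_fibre_uminus_left:
  assumes "transpose G = G"
  shows "berger_fibre G S \<delta> (- u) w = - berger_fibre G S \<delta> w u"
  using berger_fibre_scaleR_left[of G S \<delta> "-1" u w] berger_fibre_commute[OF assms] by simp

lemma gBS_form_linear_left: "linear (\<lambda>W. gBS_form g phi \<delta> z W W')"
  by (rule linearI)
    (simp_all add: gBS_form_eq_berger_sasaki berger_sasaki_def berger_fibre_def vert_add vert_scaleR
      algebra_simps)

lemma gBS_form_linear_right: "linear (\<lambda>W'. gBS_form g phi \<delta> z W W')"
  by (rule linearI)
    (simp_all add: gBS_form_eq_berger_sasaki berger_sasaki_def berger_fibre_def vert_add vert_scaleR
      algebra_simps)

lemma linear_real_expand:
  "linear (f::real^'m::finite \<Rightarrow> real) \<Longrightarrow> f W = (\<Sum>a\<in>UNIV. W$a * f (axis a 1))"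
proof -
  assume f: "linear f"
  have "f W = f (\<Sum>a\<in>UNIV. W$a *\<^sub>R axis a 1)"
    using basis_expansion[of W] by (simp add: scalar_mult_eq_scaleR)
  also have "\<dots> = (\<Sum>a\<in>UNIV. W$a * f (axis a 1))"
    using f by (simp add: linear_sum linear_scale)
  finally show ?thesis .
qed

lemma inner_gBS: "W \<bullet> (gBS g phi \<delta> z *v W') = gBS_form g phi \<delta> z W W'"
proof -
  have "gBS_form g phi \<delta> z W W' = (\<Sum>a\<in>UNIV. W$a * (\<Sum>b\<in>UNIV. W'$b * gBS_form g phi \<delta> z (axis a 1) (axis b 1)))"
    by (subst linear_real_expand[OF gBS_form_linear_left])
      (subst linear_real_expand[OF gBS_form_linear_right], rule refl)
  then show ?thesis
    by (simp add: inner_vec_def matrix_vector_mult_def gBS_def sum_distrib_left mult_ac)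
qed

lemma gBS_mult_component: "(gBS g phi \<delta> z *v W) $ a = gBS_form g phi \<delta> z (axis a 1) W"
  using inner_gBS[of "axis a 1" g phi \<delta> z W] by (simp add: inner_axis')

lemma berger_fibre_self_pos:
  assumes "\<forall>v. v \<noteq> 0 \<longrightarrow> v \<bullet> (G *v v) > 0" "u \<noteq> 0"
  shows "berger_fibre G S \<delta> u u > 0"
proof -
  have "\<delta>\<^sup>2 * (u \<bullet> S) * (u \<bullet> S) \<ge> 0"
    by (simp add: mult.assoc)
  moreover have "u \<bullet> (G *v u) > 0" using assms by blast
  ultimately show ?thesis unfolding berger_fibre_def by linarith
qed

lemma gBS_posdef:
  assumes R: "riemannian_metric_on U g" and z: "xpart z \<in> U"
  shows "\<forall>W. W \<noteq> 0 \<longrightarrow> W \<bullet> (gBS g phi \<delta> z *v W) > 0"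
proof (intro allI impI)
  fix W :: "real^('a+'a)"
  assume W: "W \<noteq> 0"
  define x where "x = xpart z"
  define V where "V = vert (christoffel g x) (ypart z) W"
  define fibre where "fibre = berger_fibre (g x) (g x *v (phi x *v ypart z)) \<delta>"
  have pos: "\<forall>v. v \<noteq> 0 \<longrightarrow> v \<bullet> (g x *v v) > 0"
    using riemannian_metric_on_posdef[OF R z] x_def by simp
  have nonneg: "v \<bullet> (g x *v v) \<ge> 0" "fibre v v \<ge> 0" for v
    using pos berger_fibre_self_pos[OF pos, of v] unfolding fibre_def
    by (cases "v = 0"; simp add: berger_fibre_def less_imp_le)+
  have "W \<bullet> (gBS g phi \<delta> z *v W) = xpart W \<bullet> (g x *v xpart W) + fibre V V"
    by (simp add: inner_gBS gBS_form_eq_berger_sasaki berger_sasaki_def x_def V_def fibre_def)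
  moreover have "xpart W \<bullet> (g x *v xpart W) > 0 \<or> fibre V V > 0"
  proof (cases "xpart W = 0")
    case True
    then have "V = ypart W" "ypart W \<noteq> 0"
      using W by (simp_all add: V_def vert_vertical xpart_ypart_eq_0_iff)
    then show ?thesis using berger_fibre_self_pos[OF pos] by (simp add: fibre_def)
  qed (simp add: pos)
  ultimately show "W \<bullet> (gBS g phi \<delta> z *v W) > 0"
    using nonneg[of "xpart W"] nonneg[of V] by linarith
qed

definition has_vec_deriv0 :: "(real \<Rightarrow> real^'n::finite) \<Rightarrow> real^'n \<Rightarrow> bool" where
  "has_vec_deriv0 w w' \<longleftrightarrow> (\<forall>a. ((\<lambda>t. w t $ a) has_real_derivative w' $ a) (at 0))"

definition has_mat_deriv0 :: "(real \<Rightarrow> real^'n::finite^'n) \<Rightarrow> real^'n^'n \<Rightarrow> bool" where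
  "has_mat_deriv0 M M' \<longleftrightarrow> (\<forall>a b. ((\<lambda>t. M t $ a $ b) has_real_derivative M' $ a $ b) (at 0))"

lemma has_vec_deriv0_const: "has_vec_deriv0 (\<lambda>t. c) 0"
  by (simp add: has_vec_deriv0_def)

lemma has_mat_deriv0_const: "has_mat_deriv0 (\<lambda>t. c) 0"
  by (simp add: has_mat_deriv0_def)

lemma has_vec_deriv0_matrix_vector_mult:
  assumes "has_mat_deriv0 M M'" "has_vec_deriv0 w w'"
  shows "has_vec_deriv0 (\<lambda>t. M t *v w t) (M' *v w 0 + M 0 *v w')"
proof -
  have M: "((\<lambda>t. M t $ a $ b) has_real_derivative M' $ a $ b) (at 0)" for a b
    using assms(1) unfolding has_mat_deriv0_def by blast
  have w: "((\<lambda>t. w t $ b) has_real_derivative w' $ b) (at 0)" for b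
    using assms(2) unfolding has_vec_deriv0_def by blast
  show ?thesis
    unfolding has_vec_deriv0_def matrix_vector_mult_def
    by (auto intro!: derivative_eq_intros M w simp: sum.distrib algebra_simps)
qed

lemma DERIV_inner0:
  assumes "has_vec_deriv0 u u'" "has_vec_deriv0 w w'"
  shows "((\<lambda>t. u t \<bullet> w t) has_real_derivative (u' \<bullet> w 0 + u 0 \<bullet> w')) (at 0)"
proof -
  have u: "((\<lambda>t. u t $ b) has_real_derivative u' $ b) (at 0)"
    and w: "((\<lambda>t. w t $ b) has_real_derivative w' $ b) (at 0)" for b
    using assms unfolding has_vec_deriv0_def by blast+
  show ?thesis
    unfolding inner_vec_def
    by (auto intro!: derivative_eq_intros u w simp: sum.distrib algebra_simps)
qed

definition vert_deriv ::
  "('n::finite \<Rightarrow> 'n \<Rightarrow> 'n \<Rightarrow> real) \<Rightarrow> ('n \<Rightarrow> 'n \<Rightarrow> 'n \<Rightarrow> real) \<Rightarrow> real^'n \<Rightarrow> real^'n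
   \<Rightarrow> real^('n+'n) \<Rightarrow> real^'n" where
  "vert_deriv C C' y y' P =
     (\<chi> k. \<Sum>a\<in>UNIV. \<Sum>b\<in>UNIV. C' k a b * xpart P $ a * y $ b + C k a b * xpart P $ a * y' $ b)"

lemma has_vec_deriv0_vert:
  assumes C: "\<And>k a b. ((\<lambda>t. C t k a b) has_real_derivative C' k a b) (at 0)"
    and y: "has_vec_deriv0 y y'"
  shows "has_vec_deriv0 (\<lambda>t. vert (C t) (y t) P) (vert_deriv (C 0) C' (y 0) y' P)"
proof -
  have y': "((\<lambda>t. y t $ b) has_real_derivative y' $ b) (at 0)" for b
    using y unfolding has_vec_deriv0_def by blast
  show ?thesis
    unfolding has_vec_deriv0_def vert_def vert_deriv_def
    by (auto intro!: derivative_eq_intros C y' simp: algebra_simps)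
qed

definition berger_sasaki_deriv where
  "berger_sasaki_deriv \<delta> G G' C C' \<Phi> \<Phi>' y y' P Q =
    (let VP = vert C y P; VQ = vert C y Q; VP' = vert_deriv C C' y y' P; VQ' = vert_deriv C C' y y' Q;
         S = G *v (\<Phi> *v y); S' = G' *v (\<Phi> *v y) + G *v (\<Phi>' *v y + \<Phi> *v y') in
     xpart P \<bullet> (G' *v xpart Q) + (VP' \<bullet> (G *v VQ) + VP \<bullet> (G' *v VQ + G *v VQ'))
     + \<delta>\<^sup>2 * ((VP' \<bullet> S + VP \<bullet> S') * (VQ \<bullet> S) + (VP \<bullet> S) * (VQ' \<bullet> S + VQ \<bullet> S')))"

lemma berger_sasaki_DERIV:
  assumes G: "has_mat_deriv0 G G'" and \<Phi>: "has_mat_deriv0 \<Phi> \<Phi>'" and y: "has_vec_deriv0 y y'"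
    and C: "\<And>k a b. ((\<lambda>t. C t k a b) has_real_derivative C' k a b) (at 0)"
  shows "((\<lambda>t. berger_sasaki \<delta> (G t) (C t) (\<Phi> t) (y t) P Q) has_real_derivative
           berger_sasaki_deriv \<delta> (G 0) G' (C 0) C' (\<Phi> 0) \<Phi>' (y 0) y' P Q) (at 0)"
proof -
  note VP = has_vec_deriv0_vert[OF C y, where P = P] and VQ = has_vec_deriv0_vert[OF C y, where P = Q]
  note S = has_vec_deriv0_matrix_vector_mult[OF G has_vec_deriv0_matrix_vector_mult[OF \<Phi> y]]
  note x = DERIV_inner0[OF has_vec_deriv0_const has_vec_deriv0_matrix_vector_mult[OF G has_vec_deriv0_const]]
  note V = DERIV_inner0[OF VP has_vec_deriv0_matrix_vector_mult[OF G VQ]]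
  note VPS = DERIV_inner0[OF VP S] and VQS = DERIV_inner0[OF VQ S]
  show ?thesis
    unfolding berger_sasaki_def berger_fibre_def berger_sasaki_deriv_def Let_def
    by (rule DERIV_cong[OF DERIV_add[OF x DERIV_add[OF V
          DERIV_mult[OF DERIV_mult[OF DERIV_const VPS] VQS]]]])
      (simp add: algebra_simps)
qed

definition gBS_pd_form ::
  "(real^'n::finite \<Rightarrow> real^'n^'n) \<Rightarrow> (real^'n \<Rightarrow> real^'n^'n) \<Rightarrow> real \<Rightarrow> 'n + 'n \<Rightarrow>
   real^('n + 'n) \<Rightarrow> real^('n + 'n) \<Rightarrow> real^('n + 'n) \<Rightarrow> real" where
  "gBS_pd_form g phi \<delta> \<mu> z P Q =
    (let x = xpart z in case \<mu> of
       Inl c \<Rightarrow> berger_sasaki_deriv \<delta> (g x) (\<chi> a b. pd c (\<lambda>y. g y $ a $ b) x)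
                 (christoffel g x) (\<lambda>k a b. pd c (\<lambda>y. christoffel g y k a b) x)
                 (phi x) (\<chi> a b. pd c (\<lambda>y. phi y $ a $ b) x) (ypart z) 0 P Q
     | Inr c \<Rightarrow> berger_sasaki_deriv \<delta> (g x) 0 (christoffel g x) (\<lambda>k a b. 0) (phi x) 0
                 (ypart z) (axis c 1) P Q)"

lemma vert_deriv_tvec_axis:
  "vert_deriv C C' y y' (tvec (axis j 1) b) = (\<chi> k. \<Sum>c\<in>UNIV. C' k j c * y $ c + C k j c * y' $ c)"
proof -
  have "(\<Sum>a\<in>UNIV. \<Sum>c\<in>UNIV. C' k a c * axis j 1 $ a * y $ c + C k a c * axis j 1 $ a * y' $ c)
      = (\<Sum>c\<in>UNIV. C' k j c * y $ c + C k j c * y' $ c)" for k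
    by (subst sum.swap) (simp add: sum.distrib)
  then show ?thesis by (simp add: vert_deriv_def)
qed

lemma berger_sasaki_deriv_horizontal_left:
  assumes "vert C y P = 0"
  shows "berger_sasaki_deriv \<delta> G G' C C' \<Phi> \<Phi>' y y' P Q
       = xpart P \<bullet> (G' *v xpart Q) + berger_fibre G (G *v (\<Phi> *v y)) \<delta> (vert_deriv C C' y y' P) (vert C y Q)"
  using assms by (simp add: berger_sasaki_deriv_def berger_fibre_def Let_def)

lemma berger_sasaki_deriv_horizontal:
  assumes "vert C y P = 0" "vert C y Q = 0"
  shows "berger_sasaki_deriv \<delta> G G' C C' \<Phi> \<Phi>' y y' P Q = xpart P \<bullet> (G' *v xpart Q)"
  using assms by (simp add: berger_sasaki_deriv_horizontal_left berger_fibre_def)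

lemma gBS_pd_form_horizontal:
  assumes "vert (christoffel g (xpart z)) (ypart z) A = 0" "vert (christoffel g (xpart z)) (ypart z) B = 0"
  shows "gBS_pd_form g phi \<delta> \<mu> z A B
       = (case \<mu> of Inl m \<Rightarrow> xpart A \<bullet> ((\<chi> a b. pd m (\<lambda>y. g y $ a $ b) (xpart z)) *v xpart B) | Inr m \<Rightarrow> 0)"
  using assms by (cases \<mu>) (simp_all add: gBS_pd_form_def Let_def berger_sasaki_deriv_horizontal)

lemma gBS_pd_form_along_horizontal:
  fixes z :: "real^('n::finite + 'n)"
  defines "x \<equiv> xpart z" and "y \<equiv> ypart z"
  assumes B: "vert (christoffel g x) y (tvec (axis j 1) b) = 0"
  shows "(\<Sum>\<alpha>\<in>UNIV. tvec (axis i 1) a $ \<alpha> * gBS_pd_form g phi \<delta> \<alpha> z (tvec (axis j 1) b) Q)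
       = axis j 1 \<bullet> ((\<chi> r s. pd i (\<lambda>y. g y $ r $ s) x) *v xpart Q)
         + berger_fibre (g x) (g x *v (phi x *v y)) \<delta>
             (\<chi> m. \<Sum>c\<in>UNIV. pd i (\<lambda>x. christoffel g x m j c) x * y $ c + christoffel g x m j c * a $ c)
             (vert (christoffel g x) y Q)"
proof -
  let ?B = "tvec (axis j 1) b"
  let ?fibre = "berger_fibre (g x) (g x *v (phi x *v y)) \<delta>"
  let ?VQ = "vert (christoffel g x) y Q"
  have Inl: "gBS_pd_form g phi \<delta> (Inl i) z ?B Q = axis j 1 \<bullet> ((\<chi> r s. pd i (\<lambda>y. g y $ r $ s) x) *v xpart Q)
      + ?fibre (\<chi> m. \<Sum>c\<in>UNIV. pd i (\<lambda>x. christoffel g x m j c) x * y $ c) ?VQ"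
    using B by (simp add: gBS_pd_form_def Let_def x_def y_def berger_sasaki_deriv_horizontal_left vert_deriv_tvec_axis)
  have Inr: "gBS_pd_form g phi \<delta> (Inr c) z ?B Q = ?fibre (\<chi> m. christoffel g x m j c) ?VQ" for c
    using B by (simp add: gBS_pd_form_def Let_def x_def y_def berger_sasaki_deriv_horizontal_left vert_deriv_tvec_axis)
  have "(\<Sum>c\<in>UNIV. a $ c * ?fibre (\<chi> m. christoffel g x m j c) ?VQ)
      = ?fibre (\<chi> m. \<Sum>c\<in>UNIV. christoffel g x m j c * a $ c) ?VQ"
  proof -
    have "(\<chi> m. \<Sum>c\<in>UNIV. christoffel g x m j c * a $ c) = (\<Sum>c\<in>UNIV. a $ c *\<^sub>R (\<chi> m. christoffel g x m j c))"
      by (simp add: vec_eq_iff sum_component mult.commute)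
    then show ?thesis by (simp add: berger_fibre_sum_left)
  qed
  then have "(\<Sum>\<alpha>\<in>UNIV. tvec (axis i 1) a $ \<alpha> * gBS_pd_form g phi \<delta> \<alpha> z ?B Q)
      = gBS_pd_form g phi \<delta> (Inl i) z ?B Q + ?fibre (\<chi> m. \<Sum>c\<in>UNIV. christoffel g x m j c * a $ c) ?VQ"
    by (simp add: sum_UNIV_Plus Inr)
  also have "\<dots> = axis j 1 \<bullet> ((\<chi> r s. pd i (\<lambda>y. g y $ r $ s) x) *v xpart Q)
      + ?fibre (\<chi> m. \<Sum>c\<in>UNIV. pd i (\<lambda>x. christoffel g x m j c) x * y $ c + christoffel g x m j c * a $ c) ?VQ"
  proof -
    have "(\<chi> m. f m) + (\<chi> m. h m) = (\<chi> m. f m + h m)" for f h :: "'n \<Rightarrow> real"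
      by (simp add: vec_eq_iff)
    then show ?thesis unfolding Inl by (simp add: berger_fibre_add_left[symmetric] sum.distrib)
  qed
  finally show ?thesis .
qed

text \<open>For constant-coefficient fields A, B this is the Koszul formula for 2 G(nabla_A B, e_l).\<close>
definition koszul :: "(real^'m::finite \<Rightarrow> real^'m^'m) \<Rightarrow> real^'m \<Rightarrow> real^'m \<Rightarrow> real^'m \<Rightarrow> 'm \<Rightarrow> real" where
  "koszul G z A B l = (\<Sum>\<alpha>\<in>UNIV. \<Sum>\<beta>\<in>UNIV. A $ \<alpha> * B $ \<beta> *
      (pd \<alpha> (\<lambda>z. G z $ \<beta> $ l) z + pd \<beta> (\<lambda>z. G z $ \<alpha> $ l) z - pd l (\<lambda>z. G z $ \<alpha> $ \<beta>) z))"

lemma christoffel_contract_koszul: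
  "(\<Sum>\<alpha>\<in>UNIV. \<Sum>\<beta>\<in>UNIV. christoffel G z \<gamma> \<alpha> \<beta> * A $ \<alpha> * B $ \<beta>)
     = (1/2) * (\<Sum>l\<in>UNIV. matrix_inv (G z) $ \<gamma> $ l * koszul G z A B l)"
proof -
  let ?K = "\<lambda>\<alpha> \<beta> l. pd \<alpha> (\<lambda>z. G z $ \<beta> $ l) z + pd \<beta> (\<lambda>z. G z $ \<alpha> $ l) z - pd l (\<lambda>z. G z $ \<alpha> $ \<beta>) z"
  have "(\<Sum>\<alpha>\<in>UNIV. \<Sum>\<beta>\<in>UNIV. christoffel G z \<gamma> \<alpha> \<beta> * A $ \<alpha> * B $ \<beta>)
      = (\<Sum>\<alpha>\<in>UNIV. \<Sum>\<beta>\<in>UNIV. \<Sum>l\<in>UNIV. (1/2) * (matrix_inv (G z) $ \<gamma> $ l * (A $ \<alpha> * B $ \<beta> * ?K \<alpha> \<beta> l)))"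
    unfolding christoffel_def by (simp add: sum_distrib_left sum_distrib_right mult_ac)
  also have "\<dots> = (\<Sum>\<alpha>\<in>UNIV. \<Sum>l\<in>UNIV. \<Sum>\<beta>\<in>UNIV. (1/2) * (matrix_inv (G z) $ \<gamma> $ l * (A $ \<alpha> * B $ \<beta> * ?K \<alpha> \<beta> l)))"
    by (rule sum.cong[OF refl]) (rule sum.swap)
  also have "\<dots> = (\<Sum>l\<in>UNIV. \<Sum>\<alpha>\<in>UNIV. \<Sum>\<beta>\<in>UNIV. (1/2) * (matrix_inv (G z) $ \<gamma> $ l * (A $ \<alpha> * B $ \<beta> * ?K \<alpha> \<beta> l)))"
    by (rule sum.swap)
  also have "\<dots> = (1/2) * (\<Sum>l\<in>UNIV. matrix_inv (G z) $ \<gamma> $ l * koszul G z A B l)"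
    unfolding koszul_def by (simp add: sum_distrib_left)
  finally show ?thesis .
qed

locale berger_data =
  fixes U :: "(real^'n::finite) set" and g phi :: "real^'n \<Rightarrow> real^'n^'n"
  assumes open_U: "open U"
    and metric: "riemannian_metric_on U g"
    and phi_Cinf: "\<And>a b. Cinf_on U (\<lambda>x. phi x $ a $ b)"
begin

lemma gBS_form_DERIV_Inl:
  assumes "xpart z \<in> U"
  shows "((\<lambda>t. gBS_form g phi \<delta> (z + t *\<^sub>R axis (Inl c) 1) P Q) has_real_derivative
           gBS_pd_form g phi \<delta> (Inl c) z P Q) (at 0)"
proof -
  define x where "x = xpart z"
  have x: "x \<in> U" using assms x_def by simp
  have "((\<lambda>t. berger_sasaki \<delta> (g (x + t *\<^sub>R axis c 1)) (christoffel g (x + t *\<^sub>R axis c 1))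
            (phi (x + t *\<^sub>R axis c 1)) ((\<lambda>t. ypart z) t) P Q) has_real_derivative
        berger_sasaki_deriv \<delta> (g (x + 0 *\<^sub>R axis c 1)) (\<chi> a b. pd c (\<lambda>y. g y $ a $ b) x)
          (christoffel g (x + 0 *\<^sub>R axis c 1)) (\<lambda>k a b. pd c (\<lambda>y. christoffel g y k a b) x)
          (phi (x + 0 *\<^sub>R axis c 1)) (\<chi> a b. pd c (\<lambda>y. phi y $ a $ b) x) (ypart z) 0 P Q) (at 0)"
  proof (rule berger_sasaki_DERIV[OF _ _ has_vec_deriv0_const])
    show "has_mat_deriv0 (\<lambda>t. g (x + t *\<^sub>R axis c 1)) (\<chi> a b. pd c (\<lambda>y. g y $ a $ b) x)"
      unfolding has_mat_deriv0_def using Cinf_on_DERIV_pd[OF riemannian_metric_on_Cinf[OF metric] x]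
      by simp
    show "has_mat_deriv0 (\<lambda>t. phi (x + t *\<^sub>R axis c 1)) (\<chi> a b. pd c (\<lambda>y. phi y $ a $ b) x)"
      unfolding has_mat_deriv0_def using Cinf_on_DERIV_pd[OF phi_Cinf x] by simp
  qed (rule christoffel_DERIV[OF open_U metric x])
  then show ?thesis by (simp add: gBS_pd_form_def gBS_form_eq_berger_sasaki x_def Let_def)
qed

lemma gBS_form_DERIV_Inr:
  "((\<lambda>t. gBS_form g phi \<delta> (z + t *\<^sub>R axis (Inr c) 1) P Q) has_real_derivative
     gBS_pd_form g phi \<delta> (Inr c) z P Q) (at 0)"
proof -
  define x where "x = xpart z"
  have "has_vec_deriv0 (\<lambda>t. ypart z + t *\<^sub>R axis c 1) (axis c 1)"
    unfolding has_vec_deriv0_def by (auto intro!: derivative_eq_intros)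
  then have "((\<lambda>t. berger_sasaki \<delta> ((\<lambda>t. g x) t) ((\<lambda>t. christoffel g x) t) ((\<lambda>t. phi x) t)
            (ypart z + t *\<^sub>R axis c 1) P Q) has_real_derivative
        berger_sasaki_deriv \<delta> (g x) 0 (christoffel g x) (\<lambda>k a b. 0) (phi x) 0
          (ypart z + 0 *\<^sub>R axis c 1) (axis c 1) P Q) (at 0)"
    by (rule berger_sasaki_DERIV[OF has_mat_deriv0_const has_mat_deriv0_const]) simp
  then show ?thesis by (simp add: gBS_pd_form_def gBS_form_eq_berger_sasaki x_def Let_def)
qed

lemma gBS_form_DERIV:
  assumes "xpart z \<in> U"
  shows "((\<lambda>t. gBS_form g phi \<delta> (z + t *\<^sub>R axis \<mu> 1) P Q) has_real_derivative
           gBS_pd_form g phi \<delta> \<mu> z P Q) (at 0)"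
  using assms gBS_form_DERIV_Inl gBS_form_DERIV_Inr by (cases \<mu>) simp_all

lemma pd_gBS:
  assumes "xpart z \<in> U"
  shows "pd \<mu> (\<lambda>z. gBS g phi \<delta> z $ \<alpha> $ \<beta>) z = gBS_pd_form g phi \<delta> \<mu> z (axis \<alpha> 1) (axis \<beta> 1)"
  by (rule pd_eqI) (simp add: gBS_def gBS_form_DERIV[OF assms])

lemma gBS_pd_form_sum_left:
  assumes "xpart z \<in> U"
  shows "(\<Sum>b\<in>UNIV. B $ b * gBS_pd_form g phi \<delta> \<mu> z (axis b 1) Q) = gBS_pd_form g phi \<delta> \<mu> z B Q"
proof (rule DERIV_unique)
  have "(\<lambda>t. gBS_form g phi \<delta> (z + t *\<^sub>R axis \<mu> 1) B Q)
      = (\<lambda>t. \<Sum>b\<in>UNIV. B $ b * gBS_form g phi \<delta> (z + t *\<^sub>R axis \<mu> 1) (axis b 1) Q)"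
    by (rule ext) (rule linear_real_expand[OF gBS_form_linear_left])
  then show "((\<lambda>t. gBS_form g phi \<delta> (z + t *\<^sub>R axis \<mu> 1) B Q) has_real_derivative
          (\<Sum>b\<in>UNIV. B $ b * gBS_pd_form g phi \<delta> \<mu> z (axis b 1) Q)) (at 0)"
    by (simp only:) (intro DERIV_sum DERIV_cmult gBS_form_DERIV[OF assms])
qed (rule gBS_form_DERIV[OF assms])

lemma gBS_pd_form_sum_right:
  assumes "xpart z \<in> U"
  shows "(\<Sum>b\<in>UNIV. B $ b * gBS_pd_form g phi \<delta> \<mu> z P (axis b 1)) = gBS_pd_form g phi \<delta> \<mu> z P B"
proof (rule DERIV_unique)
  have "(\<lambda>t. gBS_form g phi \<delta> (z + t *\<^sub>R axis \<mu> 1) P B)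
      = (\<lambda>t. \<Sum>b\<in>UNIV. B $ b * gBS_form g phi \<delta> (z + t *\<^sub>R axis \<mu> 1) P (axis b 1))"
    by (rule ext) (rule linear_real_expand[OF gBS_form_linear_right])
  then show "((\<lambda>t. gBS_form g phi \<delta> (z + t *\<^sub>R axis \<mu> 1) P B) has_real_derivative
          (\<Sum>b\<in>UNIV. B $ b * gBS_pd_form g phi \<delta> \<mu> z P (axis b 1))) (at 0)"
    by (simp only:) (intro DERIV_sum DERIV_cmult gBS_form_DERIV[OF assms])
qed (rule gBS_form_DERIV[OF assms])


lemma koszul_gBS:
  assumes z: "xpart z \<in> U"
  shows "koszul (gBS g phi \<delta>) z A B l
     = (\<Sum>\<alpha>\<in>UNIV. A $ \<alpha> * gBS_pd_form g phi \<delta> \<alpha> z B (axis l 1))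
       + (\<Sum>\<alpha>\<in>UNIV. B $ \<alpha> * gBS_pd_form g phi \<delta> \<alpha> z A (axis l 1))
       - gBS_pd_form g phi \<delta> l z A B"
proof -
  let ?d = "\<lambda>\<mu> P Q. gBS_pd_form g phi \<delta> \<mu> z P Q"
  have "koszul (gBS g phi \<delta>) z A B l
      = (\<Sum>\<alpha>\<in>UNIV. \<Sum>\<beta>\<in>UNIV. A $ \<alpha> * (B $ \<beta> * ?d \<alpha> (axis \<beta> 1) (axis l 1)))
       + (\<Sum>\<alpha>\<in>UNIV. \<Sum>\<beta>\<in>UNIV. B $ \<beta> * (A $ \<alpha> * ?d \<beta> (axis \<alpha> 1) (axis l 1)))
       - (\<Sum>\<alpha>\<in>UNIV. \<Sum>\<beta>\<in>UNIV. A $ \<alpha> * (B $ \<beta> * ?d l (axis \<alpha> 1) (axis \<beta> 1)))"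
    unfolding koszul_def pd_gBS[OF z] by (simp add: algebra_simps sum.distrib sum_subtractf)
  also have "(\<Sum>\<alpha>\<in>UNIV. \<Sum>\<beta>\<in>UNIV. A $ \<alpha> * (B $ \<beta> * ?d \<alpha> (axis \<beta> 1) (axis l 1)))
      = (\<Sum>\<alpha>\<in>UNIV. A $ \<alpha> * ?d \<alpha> B (axis l 1))"
    by (simp add: sum_distrib_left[symmetric] gBS_pd_form_sum_left[OF z])
  also have "(\<Sum>\<alpha>\<in>UNIV. \<Sum>\<beta>\<in>UNIV. B $ \<beta> * (A $ \<alpha> * ?d \<beta> (axis \<alpha> 1) (axis l 1)))
      = (\<Sum>\<beta>\<in>UNIV. B $ \<beta> * ?d \<beta> A (axis l 1))"
    by (subst sum.swap) (simp add: sum_distrib_left[symmetric] gBS_pd_form_sum_left[OF z])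
  also have "(\<Sum>\<alpha>\<in>UNIV. \<Sum>\<beta>\<in>UNIV. A $ \<alpha> * (B $ \<beta> * ?d l (axis \<alpha> 1) (axis \<beta> 1))) = ?d l A B"
    by (simp add: sum_distrib_left[symmetric] gBS_pd_form_sum_right[OF z] gBS_pd_form_sum_left[OF z])
  finally show ?thesis .
qed

end


lemma dmap_section_map:
  "dmap (section_map \<xi>) x i = tvec (axis i 1) (\<chi> k. pd i (\<lambda>y. \<xi> y $ k) x)"
proof -
  have "dmap (section_map \<xi>) x i $ \<alpha> = tvec (axis i 1) (\<chi> k. pd i (\<lambda>y. \<xi> y $ k) x) $ \<alpha>" for \<alpha>
    by (cases \<alpha>) (simp_all add: dmap_def section_map_def pd_coordinate axis_def)
  then show ?thesis by (simp add: vec_eq_iff)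
qed

definition coord_hessian ::
  "(real^'n::finite \<Rightarrow> real^'n^'n) \<Rightarrow> (real^'n \<Rightarrow> real^'m::finite) \<Rightarrow> real^'n \<Rightarrow> 'n \<Rightarrow> 'n \<Rightarrow> real^'m" where
  "coord_hessian g F x i j =
     (\<chi> \<gamma>. pd i (\<lambda>y. pd j (\<lambda>y'. F y' $ \<gamma>) y) x - (\<Sum>k\<in>UNIV. christoffel g x k i j * pd k (\<lambda>y. F y $ \<gamma>) x))"

lemma sff_eq_coord_hessian_koszul:
  "sff g G F x i j \<gamma> = coord_hessian g F x i j $ \<gamma>
     + (1/2) * (\<Sum>l\<in>UNIV. matrix_inv (G (F x)) $ \<gamma> $ l * koszul G (F x) (dmap F x i) (dmap F x j) l)"
  unfolding sff_def coord_hessian_def christoffel_contract_koszul by simp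

locale isometric_section = berger_data U g phi
  for U :: "(real^'n::finite) set" and g phi :: "real^'n \<Rightarrow> real^'n^'n" +
  fixes \<delta> :: real and \<xi> :: "real^'n \<Rightarrow> real^'n"
  assumes xi_smooth: "smooth_vector_field U \<xi>"
    and isometric: "isometric_immersion U g (gBS g phi \<delta>) (section_map \<xi>)"
begin

lemma xi_Cinf: "Cinf_on U (\<lambda>x. \<xi> x $ m)"
  using xi_smooth unfolding smooth_vector_field_def by blast

lemma section_horizontal:
  assumes x: "x \<in> U"
  shows "vert (christoffel g x) (\<xi> x) (dmap (section_map \<xi>) x i) = 0"
proof (rule ccontr)
  define W where "W = dmap (section_map \<xi>) x i"
  define V where "V = vert (christoffel g x) (\<xi> x) W"
  assume "vert (christoffel g x) (\<xi> x) (dmap (section_map \<xi>) x i) \<noteq> 0"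
  then have "berger_fibre (g x) (g x *v (phi x *v \<xi> x)) \<delta> V V > 0"
    using berger_fibre_self_pos riemannian_metric_on_posdef[OF metric x] unfolding V_def W_def by blast
  moreover have "W \<bullet> (gBS g phi \<delta> (section_map \<xi> x) *v W) = g x $ i $ i"
    using isometric x unfolding isometric_immersion_def W_def by blast
  then have "g x $ i $ i + berger_fibre (g x) (g x *v (phi x *v \<xi> x)) \<delta> V V = g x $ i $ i"
    by (simp add: inner_gBS gBS_form_eq_berger_sasaki berger_sasaki_def section_map_def W_def V_def
        dmap_section_map inner_axis_mult_axis)
  ultimately show False by simp
qed

lemma section_parallel:
  assumes "x \<in> U"
  shows "pd i (\<lambda>y. \<xi> y $ m) x = - (\<Sum>b\<in>UNIV. christoffel g x m i b * \<xi> x $ b)"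
  using section_horizontal[OF assms, of i]
  by (simp add: dmap_section_map vert_tvec_axis vec_eq_iff eq_neg_iff_add_eq_0)

lemma section_pd_christoffel:
  assumes x0: "x0 \<in> U"
  shows "(\<chi> m. \<Sum>c\<in>UNIV. pd i (\<lambda>x. christoffel g x m j c) x0 * \<xi> x0 $ c
              + christoffel g x0 m j c * pd i (\<lambda>y. \<xi> y $ c) x0)
       = - (\<chi> m. pd i (\<lambda>y. pd j (\<lambda>y'. \<xi> y' $ m) y) x0)"
proof -
  have "pd i (\<lambda>y. pd j (\<lambda>y'. \<xi> y' $ m) y) x0
      = pd i (\<lambda>y. - (\<Sum>c\<in>UNIV. christoffel g y m j c * \<xi> y $ c)) x0" for m
    by (rule pd_cong_open[OF open_U x0]) (rule section_parallel)
  also have "\<dots> m = - (\<Sum>c\<in>UNIV. pd i (\<lambda>x. christoffel g x m j c) x0 * \<xi> x0 $ c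
      + christoffel g x0 m j c * pd i (\<lambda>y. \<xi> y $ c) x0)" for m
    by (rule pd_eqI)
      (auto intro!: derivative_eq_intros christoffel_DERIV[OF open_U metric x0]
        Cinf_on_DERIV_pd[OF xi_Cinf x0] simp: algebra_simps)
  finally show ?thesis by (simp add: vec_eq_iff)
qed

lemma gBS_pd_form_along_section:
  fixes i j :: 'n
  assumes x0: "x0 \<in> U"
  defines "F \<equiv> section_map \<xi>"
  shows "(\<Sum>\<alpha>\<in>UNIV. dmap F x0 i $ \<alpha> * gBS_pd_form g phi \<delta> \<alpha> (F x0) (dmap F x0 j) Q)
       = axis j 1 \<bullet> ((\<chi> r s. pd i (\<lambda>y. g y $ r $ s) x0) *v xpart Q)
         + berger_fibre (g x0) (g x0 *v (phi x0 *v \<xi> x0)) \<delta>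
             (- (\<chi> m. pd i (\<lambda>y. pd j (\<lambda>y'. \<xi> y' $ m) y) x0)) (vert (christoffel g x0) (\<xi> x0) Q)"
proof -
  have "vert (christoffel g (xpart (F x0))) (ypart (F x0)) (tvec (axis j 1) (\<chi> k. pd j (\<lambda>y. \<xi> y $ k) x0)) = 0"
    using section_horizontal[OF x0, of j] by (simp add: F_def section_map_def dmap_section_map)
  from gBS_pd_form_along_horizontal[OF this] show ?thesis
    using section_pd_christoffel[OF x0, of i j] by (simp add: F_def section_map_def dmap_section_map)
qed

lemma coord_hessian_section:
  fixes i j :: 'n
  assumes x0: "x0 \<in> U"
  defines "H \<equiv> coord_hessian g (section_map \<xi>) x0 i j"
  shows "xpart H = - (\<chi> a. christoffel g x0 a i j)"
    and "vert (christoffel g x0) (\<xi> x0) H = (\<chi> m. pd i (\<lambda>y. pd j (\<lambda>y'. \<xi> y' $ m) y) x0)"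
proof -
  have pd_coord: "pd k (\<lambda>y. y $ a) = (\<lambda>x. if a = k then 1 else 0)" for k a :: 'n
    by (rule ext) (simp add: pd_coordinate)
  have "(\<Sum>k\<in>UNIV. christoffel g x0 k i j * (if a = k then 1 else 0)) = christoffel g x0 a i j" for a
    by (simp add: if_distrib cong: if_cong)
  then show xH: "xpart H = - (\<chi> a. christoffel g x0 a i j)"
    by (simp add: H_def xpart_def coord_hessian_def section_map_def pd_coord vec_eq_iff)
  have "(\<Sum>k\<in>UNIV. christoffel g x0 k i j * pd k (\<lambda>y. \<xi> y $ m) x0)
      = - (\<Sum>a\<in>UNIV. \<Sum>b\<in>UNIV. christoffel g x0 m a b * christoffel g x0 a i j * \<xi> x0 $ b)" for m
    by (simp add: section_parallel[OF x0] sum_distrib_left sum_negf mult_ac)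
  moreover have "ypart H = (\<chi> m. pd i (\<lambda>y. pd j (\<lambda>y'. \<xi> y' $ m) y) x0
      - (\<Sum>k\<in>UNIV. christoffel g x0 k i j * pd k (\<lambda>y. \<xi> y $ m) x0))"
    by (simp add: H_def ypart_def coord_hessian_def section_map_def)
  ultimately show "vert (christoffel g x0) (\<xi> x0) H = (\<chi> m. pd i (\<lambda>y. pd j (\<lambda>y'. \<xi> y' $ m) y) x0)"
    by (simp add: vert_def xH vec_eq_iff sum_negf)
qed

lemma koszul_section:
  fixes i j :: 'n
  assumes x0: "x0 \<in> U"
  defines "F \<equiv> section_map \<xi>" and "G \<equiv> gBS g phi \<delta>"
  shows "koszul G (F x0) (dmap F x0 i) (dmap F x0 j) l = - 2 * (G (F x0) *v coord_hessian g F x0 i j) $ l"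
proof -
  define z0 y0 C0 where "z0 = F x0" and "y0 = \<xi> x0" and "C0 = christoffel g x0"
  define Z where "Z = (\<chi> m. pd i (\<lambda>y. pd j (\<lambda>y'. \<xi> y' $ m) y) x0)"
  define fibre where "fibre = berger_fibre (g x0) (g x0 *v (phi x0 *v y0)) \<delta>"
  define Dg where "Dg c = (\<chi> a b. pd c (\<lambda>y. g y $ a $ b) x0)" for c
  define a b where "a = (\<chi> k. pd i (\<lambda>y. \<xi> y $ k) x0)" and "b = (\<chi> k. pd j (\<lambda>y. \<xi> y $ k) x0)"
  have xz: "xpart z0 = x0" "ypart z0 = y0" and z0: "xpart z0 \<in> U"
    using x0 by (simp_all add: z0_def F_def section_map_def y0_def)
  have A: "dmap F x0 i = tvec (axis i 1) a" and B: "dmap F x0 j = tvec (axis j 1) b"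
    by (simp_all add: F_def a_def b_def dmap_section_map)
  have VA: "vert C0 y0 (tvec (axis i 1) a) = 0" and VB: "vert C0 y0 (tvec (axis j 1) b) = 0"
    using section_horizontal[OF x0] unfolding C0_def y0_def A[symmetric] B[symmetric] F_def by simp_all
  have "(\<chi> m. pd j (\<lambda>y. pd i (\<lambda>y'. \<xi> y' $ m) y) x0) = Z"
    unfolding Z_def vec_eq_iff using Cinf_on_pd_commute[OF open_U x0 xi_Cinf] by simp
  then have D1: "(\<Sum>\<alpha>\<in>UNIV. tvec (axis i 1) a $ \<alpha> * gBS_pd_form g phi \<delta> \<alpha> z0 (tvec (axis j 1) b) Q)
        = axis j 1 \<bullet> (Dg i *v xpart Q) + fibre (- Z) (vert C0 y0 Q)"
    and D2: "(\<Sum>\<alpha>\<in>UNIV. tvec (axis j 1) b $ \<alpha> * gBS_pd_form g phi \<delta> \<alpha> z0 (tvec (axis i 1) a) Q)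
        = axis i 1 \<bullet> (Dg j *v xpart Q) + fibre (- Z) (vert C0 y0 Q)" for Q
    using gBS_pd_form_along_section[OF x0, of i j Q] gBS_pd_form_along_section[OF x0, of j i Q]
    unfolding F_def[symmetric] A B z0_def[symmetric] by (simp_all add: Z_def fibre_def Dg_def C0_def y0_def)
  have D3: "gBS_pd_form g phi \<delta> l z0 (tvec (axis i 1) a) (tvec (axis j 1) b)
      = (case l of Inl m \<Rightarrow> Dg m $ i $ j | Inr m \<Rightarrow> 0)"
    using gBS_pd_form_horizontal[of g z0 "tvec (axis i 1) a" "tvec (axis j 1) b" phi \<delta> l] VA VB
    by (cases l) (simp_all add: xz C0_def Dg_def inner_axis_mult_axis)
  have GH: "(G z0 *v coord_hessian g F x0 i j) $ l
      = xpart (axis l 1) \<bullet> (g x0 *v - (\<chi> a. C0 a i j)) + fibre (vert C0 y0 (axis l 1)) Z"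
    using coord_hessian_section[OF x0, of i j]
    by (simp add: G_def F_def gBS_mult_component gBS_form_eq_berger_sasaki berger_sasaki_def
        xz fibre_def C0_def y0_def Z_def)
  note fibre_neg = berger_fibre_uminus_left[OF riemannian_metric_on_sym[OF metric x0],
      where S = "g x0 *v (phi x0 *v y0)" and \<delta> = \<delta>, folded fibre_def]
  note koszul_expand = z0_def[symmetric] A B koszul_gBS[OF z0, where \<delta> = \<delta>, folded G_def] D1 D2 D3 GH
  show ?thesis
  proof (cases l)
    case (Inl m)
    have "axis m 1 \<bullet> (g x0 *v - (\<chi> a. C0 a i j)) = - (\<Sum>a\<in>UNIV. g x0 $ m $ a * christoffel g x0 a i j)"
      by (simp add: inner_axis' matrix_vector_mult_def C0_def sum_negf)
    then have "axis m 1 \<bullet> (g x0 *v - (\<chi> a. C0 a i j)) = - (1/2) * (Dg i $ j $ m + Dg j $ i $ m - Dg m $ i $ j)"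
      by (simp add: metric_christoffel_contract[OF metric x0] Dg_def)
    then show ?thesis
      using Inl unfolding koszul_expand by (simp add: inner_axis_mult_axis fibre_neg algebra_simps)
  qed (unfold koszul_expand, simp add: fibre_neg)
qed

lemma section_sff_eq_0:
  assumes x0: "x0 \<in> U"
  shows "sff g (gBS g phi \<delta>) (section_map \<xi>) x0 i j \<gamma> = 0"
proof -
  define G F where "G = gBS g phi \<delta> (section_map \<xi> x0)" and "F = section_map \<xi>"
  define H where "H = coord_hessian g F x0 i j"
  have "xpart (F x0) \<in> U" using x0 by (simp add: F_def section_map_def)
  then have inv: "matrix_inv G ** G = mat 1"
    unfolding G_def F_def by (intro matrix_inv_left posdef_invertible gBS_posdef[OF metric])
  have "sff g (gBS g phi \<delta>) F x0 i j \<gamma> = H $ \<gamma> + (1/2) * (\<Sum>l\<in>UNIV. matrix_inv G $ \<gamma> $ l * (- 2 * (G *v H) $ l))"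
    unfolding sff_eq_coord_hessian_koszul koszul_section[OF x0] H_def G_def F_def ..
  also have "\<dots> = H $ \<gamma> - (matrix_inv G *v (G *v H)) $ \<gamma>"
    by (simp add: matrix_vector_mult_def sum_distrib_left sum_negf mult_ac)
  also have "\<dots> = 0"
    by (simp add: matrix_vector_mul_assoc inv)
  finally show ?thesis unfolding F_def .
qed

end

theorem mainTheorem7:
  fixes U :: "(real^'n::finite) set"
    and g phi :: "real^'n \<Rightarrow> real^'n^'n"
    and \<xi> :: "real^'n \<Rightarrow> real^'n"
    and k :: nat and \<delta> :: real
  assumes "open U"
    and "anti_paraKaehler U g phi k"
    and "smooth_vector_field U \<xi>"
    and "isometric_immersion U g (gBS g phi \<delta>) (section_map \<xi>)"
  shows "totally_geodesic U g (gBS g phi \<delta>) (section_map \<xi>)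
       \<and> harmonic_map U g (gBS g phi \<delta>) (section_map \<xi>)"
proof -
  interpret isometric_section U g phi \<delta> \<xi>
    using assms unfolding anti_paraKaehler_def by unfold_locales blast+
  have "sff g (gBS g phi \<delta>) (section_map \<xi>) x i j \<gamma> = 0" if "x \<in> U" for x i j \<gamma>
    using that by (rule section_sff_eq_0)
  then show ?thesis
    unfolding totally_geodesic_def harmonic_map_def tension_def by simp
qed

end
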